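(* Let $k\ge1$. The logic $\mathbb{L}_k^{\le}$ is a logic of formal undeterminedness with respect to $\sim$ and $\circ$: (a) $\not\models_k^{\le}p\vee\sim p$ for a propositional variable $p$ (so $\mathbb{L}_k^{\le}$ is paracomplete); (b) for a propositional variable $p$, $\circ p\not\models_k^{\le}p$ and $\circ p\not\models_k^{\le}\sim p$; (c) $\circ\alpha\models_k^{\le}\alpha\vee\sim\alpha$ for every formula $\alpha$.
   Context: A modal pseudocomplemented De Morgan algebra ($mpM$-algebra) is an algebra $\langle A,\wedge,\vee,\sim,{}^\ast,0,1\rangle$ such that $\langle A,\wedge,\vee,\sim,0,1\rangle$ is a De Morgan algebra (bounded distributive lattice with $\sim\sim x=x$, $\sim(x\vee y)=\sim x\wedge\sim y$), $x^\ast$ is the pseudocomplement of $x$, and $x\vee\sim x\le x\vee x^\ast$. A $\mathcal{C}_k$-algebra ($k\ge1$) is a pair $(A,t)$ with $A$ an $mpM$-algebra and $t$ an $mpM$-automorphism of $A$ with $t^k=\mathrm{id}$. $Fm$ is the set of formulas built from a denumerable set of variables with connectives $\wedge,\vee$ (binary), $\sim,{}^\ast,t$ (unary), $\top,\bot$ (constants); a valuation into a $\mathcal{C}_k$-algebra $(A,t)$ is a homomorphism $v:Fm\to(A,t)$ (with $v(\top)=1$, $v(\bot)=0$). The degree-preserving logic $\mathbb{L}_k^{\le}=\langle Fm,\models_k^{\le}\rangle$: for nonempty finite $\{\alpha_1,\dots,\alpha_n\}$, $\alpha_1,\dots,\alpha_n\models_k^{\le}\alpha$ iff for every $\mathcal{C}_k$-algebra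 $(A,t)$, every valuation $v$ and every $a\in A$, if $v(\alpha_i)\ge a$ for all $i$ then $v(\alpha)\ge a$; $\emptyset\models_k^{\le}\alpha$ iff $v(\alpha)=1$ for all $(A,t)$ and $v$; for infinite $\Gamma$, $\Gamma\models_k^{\le}\alpha$ iff some finite nonempty subset of $\Gamma$ entails $\alpha$. The consistency operator is $\circ\alpha=\bigwedge_{i=0}^{k}t^i\big((\sim\alpha\vee\alpha)\wedge(\alpha\wedge\sim\alpha)^\ast\big)$. *)

theory Defs
  imports Main
begin

record 'a cka =
  carrier :: "'a set"
  meet :: "'a \<Rightarrow> 'a \<Rightarrow> 'a"
  join :: "'a \<Rightarrow> 'a \<Rightarrow> 'a"
  neg  :: "'a \<Rightarrow> 'a"
  pc   :: "'a \<Rightarrow> 'a"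
  zero :: "'a"
  one  :: "'a"
  tau  :: "'a \<Rightarrow> 'a"

definition leq :: "'a cka \<Rightarrow> 'a \<Rightarrow> 'a \<Rightarrow> bool" where
  "leq C x y \<longleftrightarrow> meet C x y = x"

definition bdl :: "'a cka \<Rightarrow> bool" where
  "bdl C \<longleftrightarrow>
     zero C \<in> carrier C \<and> one C \<in> carrier C \<and>
     (\<forall>x\<in>carrier C. \<forall>y\<in>carrier C. meet C x y \<in> carrier C \<and> join C x y \<in> carrier C) \<and>
     (\<forall>x\<in>carrier C. \<forall>y\<in>carrier C. \<forall>z\<in>carrier C.
        meet C (meet C x y) z = meet C x (meet C y z) \<and>
        join C (join C x y) z = join C x (join C y z) \<and>
        meet C x (join C y z) = join C (meet C x y) (meet C x z)) \<and>
     (\<forall>x\<in>carrier C. \<forall>y\<in>carrier C.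
        meet C x y = meet C y x \<and> join C x y = join C y x \<and>
        meet C x (join C x y) = x \<and> join C x (meet C x y) = x) \<and>
     (\<forall>x\<in>carrier C. join C x (zero C) = x \<and> meet C x (one C) = x)"

definition de_morgan :: "'a cka \<Rightarrow> bool" where
  "de_morgan C \<longleftrightarrow> bdl C \<and>
     (\<forall>x\<in>carrier C. neg C x \<in> carrier C \<and> neg C (neg C x) = x) \<and>
     (\<forall>x\<in>carrier C. \<forall>y\<in>carrier C. neg C (join C x y) = meet C (neg C x) (neg C y))"

definition mpM :: "'a cka \<Rightarrow> bool" where
  "mpM C \<longleftrightarrow> de_morgan C \<and>
     (\<forall>x\<in>carrier C. pc C x \<in> carrier C \<and> meet C x (pc C x) = zero C \<and>
        (\<forall>y\<in>carrier C. meet C x y = zero C \<longrightarrow> leq C y (pc C x))) \<and>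
     (\<forall>x\<in>carrier C. leq C (join C x (neg C x)) (join C x (pc C x)))"

definition Ck_alg :: "nat \<Rightarrow> 'a cka \<Rightarrow> bool" where
  "Ck_alg k C \<longleftrightarrow> mpM C \<and>
     bij_betw (tau C) (carrier C) (carrier C) \<and>
     (\<forall>x\<in>carrier C. \<forall>y\<in>carrier C.
        tau C (meet C x y) = meet C (tau C x) (tau C y) \<and>
        tau C (join C x y) = join C (tau C x) (tau C y)) \<and>
     (\<forall>x\<in>carrier C. tau C (neg C x) = neg C (tau C x) \<and> tau C (pc C x) = pc C (tau C x)) \<and>
     tau C (zero C) = zero C \<and> tau C (one C) = one C \<and>
     (\<forall>x\<in>carrier C. (tau C ^^ k) x = x)"

datatype fm = Var nat | And fm fm | Or fm fm | Neg fm | Star fm | T fm | Top | Bot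

text \<open>A valuation (homomorphism Fm \<rightarrow> (A,t)) is determined by its values on variables.\<close>
primrec eval :: "'a cka \<Rightarrow> (nat \<Rightarrow> 'a) \<Rightarrow> fm \<Rightarrow> 'a" where
  "eval C v (Var n) = v n"
| "eval C v (And a b) = meet C (eval C v a) (eval C v b)"
| "eval C v (Or a b) = join C (eval C v a) (eval C v b)"
| "eval C v (Neg a) = neg C (eval C v a)"
| "eval C v (Star a) = pc C (eval C v a)"
| "eval C v (T a) = tau C (eval C v a)"
| "eval C v Top = one C"
| "eval C v Bot = zero C"

definition valuation :: "'a cka \<Rightarrow> (nat \<Rightarrow> 'a) \<Rightarrow> bool" where
  "valuation C v \<longleftrightarrow> (\<forall>n. v n \<in> carrier C)"

section \<open>Degree-preserving consequence, relative to algebras on carrier type 'a\<close>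

definition ent_fin :: "nat \<Rightarrow> 'a itself \<Rightarrow> fm set \<Rightarrow> fm \<Rightarrow> bool" where
  "ent_fin k _ \<Gamma> \<alpha> \<longleftrightarrow>
     (\<forall>(C::'a cka) v. Ck_alg k C \<longrightarrow> valuation C v \<longrightarrow>
        (\<forall>a\<in>carrier C. (\<forall>\<beta>\<in>\<Gamma>. leq C a (eval C v \<beta>)) \<longrightarrow> leq C a (eval C v \<alpha>)))"

definition ent :: "nat \<Rightarrow> 'a itself \<Rightarrow> fm set \<Rightarrow> fm \<Rightarrow> bool" where
  "ent k ty \<Gamma> \<alpha> \<longleftrightarrow>
     (if \<Gamma> = {} then
        (\<forall>(C::'a cka) v. Ck_alg k C \<longrightarrow> valuation C v \<longrightarrow> eval C v \<alpha> = one C)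
      else if finite \<Gamma> then ent_fin k ty \<Gamma> \<alpha>
      else (\<exists>\<Delta>\<subseteq>\<Gamma>. finite \<Delta> \<and> \<Delta> \<noteq> {} \<and> ent_fin k ty \<Delta> \<alpha>))"

definition tpow :: "nat \<Rightarrow> fm \<Rightarrow> fm" where
  "tpow i \<phi> = (T ^^ i) \<phi>"

primrec bigconj_t :: "nat \<Rightarrow> fm \<Rightarrow> fm" where
  "bigconj_t 0 \<phi> = tpow 0 \<phi>"
| "bigconj_t (Suc n) \<phi> = And (bigconj_t n \<phi>) (tpow (Suc n) \<phi>)"

definition circ :: "nat \<Rightarrow> fm \<Rightarrow> fm" where
  "circ k \<alpha> = bigconj_t k (And (Or (Neg \<alpha>) \<alpha>) (Star (And \<alpha> (Neg \<alpha>))))"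

end

theory Submission
  imports Defs
begin

text \<open>Part (c) holds in every \<open>C\<^sub>k\<close>-algebra because the conjunct \<open>i = 0\<close> of \<open>\<circ>\<alpha>\<close> contains
  \<open>\<sim>\<alpha> \<or> \<alpha>\<close>, and in a lattice an element below a meet lies below each meetand. Parts (a) and (b)
  are refuted in the three-element chain \<open>0 < 1 < 2\<close> with \<open>\<sim>x = 2 - x\<close>, the pseudocomplement
  of a chain and \<open>t = id\<close>: the value \<open>1\<close> gives \<open>p \<or> \<sim>p = 1 \<noteq> 2\<close>, while at the classical
  values \<open>0\<close> and \<open>2\<close> the formula \<open>\<circ>p\<close> evaluates to \<open>2\<close>, so it cannot entail \<open>p\<close> (at \<open>0\<close>) or
  \<open>\<sim>p\<close> (at \<open>2\<close>).\<close>

lemma eval_in_carrier: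
  assumes "Ck_alg k C" "valuation C v"
  shows "eval C v \<phi> \<in> carrier C"
proof -
  have "mpM C" "bij_betw (tau C) (carrier C) (carrier C)"
    using assms(1) by (auto simp: Ck_alg_def)
  then show ?thesis
    by (induction \<phi>) (use assms(2) in
        \<open>auto simp: valuation_def mpM_def de_morgan_def bdl_def bij_betw_def\<close>)
qed

lemma leq_meetD1:
  assumes "bdl C" "a \<in> carrier C" "x \<in> carrier C" "y \<in> carrier C"
    and "leq C a (meet C x y)"
  shows "leq C a x"
proof -
  have a_eq: "meet C a (meet C x y) = a"
    using assms(5) by (simp add: leq_def)
  have idem: "meet C x x = x"
    using assms(1,3) unfolding bdl_def by metis
  have "meet C a x = meet C a (meet C (meet C x y) x)"
    using assms(1-4) a_eq unfolding bdl_def by (metis (no_types, lifting))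
  also have "meet C (meet C x y) x = meet C x y"
    using assms(1,3,4) idem unfolding bdl_def by metis
  finally show ?thesis
    using a_eq by (simp add: leq_def)
qed

lemma leq_bigconj_tD:
  assumes "Ck_alg k C" "valuation C v" "a \<in> carrier C"
    and "leq C a (eval C v (bigconj_t n \<phi>))"
  shows "leq C a (eval C v \<phi>)"
  using assms(4)
proof (induction n)
  case 0
  then show ?case by (simp add: tpow_def)
next
  case (Suc n)
  have "bdl C"
    using assms(1) by (simp add: Ck_alg_def mpM_def de_morgan_def)
  then have "leq C a (eval C v (bigconj_t n \<phi>))"
    using Suc.prems leq_meetD1[OF \<open>bdl C\<close> assms(3)] eval_in_carrier[OF assms(1,2)]
    by (simp, blast)
  then show ?case
    by (rule Suc.IH)
qed

lemma leq_circD: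
  assumes "Ck_alg k C" "valuation C v" "a \<in> carrier C"
    and "leq C a (eval C v (circ n \<alpha>))"
  shows "leq C a (join C (eval C v \<alpha>) (neg C (eval C v \<alpha>)))"
proof -
  have bdl: "bdl C"
    using assms(1) by (simp add: Ck_alg_def mpM_def de_morgan_def)
  note in_carrier = eval_in_carrier[OF assms(1,2)]
  have "leq C a (eval C v (And (Or (Neg \<alpha>) \<alpha>) (Star (And \<alpha> (Neg \<alpha>)))))"
    using leq_bigconj_tD[OF assms(1-3)] assms(4) unfolding circ_def by blast
  then have "leq C a (join C (neg C (eval C v \<alpha>)) (eval C v \<alpha>))"
    using leq_meetD1[OF bdl assms(3)] in_carrier by (metis eval.simps(2,3,4))
  moreover have "join C (neg C (eval C v \<alpha>)) (eval C v \<alpha>)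
      = join C (eval C v \<alpha>) (neg C (eval C v \<alpha>))"
    using bdl in_carrier unfolding bdl_def by (metis eval.simps(4))
  ultimately show ?thesis by simp
qed

lemma ent_singleton_iff: "ent k ty {\<beta>} \<alpha> \<longleftrightarrow> ent_fin k ty {\<beta>} \<alpha>"
  by (simp add: ent_def)

lemma ent_circ_excluded_middle: "ent k TYPE('a) {circ k \<alpha>} (Or \<alpha> (Neg \<alpha>))"
  unfolding ent_singleton_iff ent_fin_def using leq_circD by fastforce

lemma not_ent_emptyI:
  fixes C :: "'a cka"
  assumes "Ck_alg k C" "valuation C v" "eval C v \<alpha> \<noteq> one C"
  shows "\<not> ent k TYPE('a) {} \<alpha>"
  using assms by (auto simp: ent_def)

lemma not_ent_singletonI:
  fixes C :: "'a cka"
  assumes "Ck_alg k C" "valuation C v" "a \<in> carrier C"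
    and "leq C a (eval C v \<beta>)" "\<not> leq C a (eval C v \<alpha>)"
  shows "\<not> ent k TYPE('a) {\<beta>} \<alpha>"
  using assms unfolding ent_singleton_iff ent_fin_def by blast

definition chain3 :: "nat cka" where
  "chain3 = \<lparr>carrier = {0, 1, 2}, meet = min, join = max, neg = (\<lambda>x. 2 - x),
     pc = (\<lambda>x. if x = 0 then 2 else 0), zero = 0, one = 2, tau = id\<rparr>"

lemma Ck_alg_chain3: "Ck_alg k chain3"
  unfolding Ck_alg_def mpM_def de_morgan_def bdl_def leq_def chain3_def
  by (auto simp: id_funpow)

lemma valuation_chain3_const: "x \<in> {0, 1, 2} \<Longrightarrow> valuation chain3 (\<lambda>_. x)"
  by (simp add: valuation_def chain3_def)

lemma eval_chain3_tpow: "eval chain3 v (tpow i \<phi>) = eval chain3 v \<phi>"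
  unfolding tpow_def by (induction i) (simp_all add: chain3_def)

lemma eval_chain3_bigconj_t: "eval chain3 v (bigconj_t n \<phi>) = eval chain3 v \<phi>"
  by (induction n) (simp_all add: eval_chain3_tpow, simp add: chain3_def)

lemma eval_chain3_circ_classical:
  assumes "eval chain3 v \<phi> \<in> {0, 2}"
  shows "eval chain3 v (circ k \<phi>) = 2"
  using assms unfolding circ_def eval_chain3_bigconj_t by (auto simp: chain3_def)

theorem lemma6p5:
  fixes k p :: nat and \<alpha> :: fm
  assumes "k \<ge> 1"
  shows "\<not> ent k TYPE(nat) {} (Or (Var p) (Neg (Var p)))
       \<and> \<not> ent k TYPE(nat) {circ k (Var p)} (Var p)
       \<and> \<not> ent k TYPE(nat) {circ k (Var p)} (Neg (Var p))
       \<and> ent k TYPE('a) {circ k \<alpha>} (Or \<alpha> (Neg \<alpha>))"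
proof (intro conjI ent_circ_excluded_middle)
  show "\<not> ent k TYPE(nat) {} (Or (Var p) (Neg (Var p)))"
    by (rule not_ent_emptyI[OF Ck_alg_chain3 valuation_chain3_const[of 1]])
      (simp_all add: chain3_def)
  show "\<not> ent k TYPE(nat) {circ k (Var p)} (Var p)"
    by (rule not_ent_singletonI[OF Ck_alg_chain3 valuation_chain3_const[of 0], where a = 2])
      (simp_all add: eval_chain3_circ_classical, simp_all add: chain3_def leq_def)
  show "\<not> ent k TYPE(nat) {circ k (Var p)} (Neg (Var p))"
    by (rule not_ent_singletonI[OF Ck_alg_chain3 valuation_chain3_const[of 2], where a = 2])
      (simp_all add: eval_chain3_circ_classical, simp_all add: chain3_def leq_def)
qed

end
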